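(* Let $X$ be a metric space, $\mathscr{F}\in\mathrm{IFS}_k(X)$, and let $B\subset X$ be an open set with $X=\overline{\mathcal{O}^+_{\mathscr{F}}(B)}=\mathcal{O}^-_{\mathscr{F}}(B)$. Suppose there are maps $\{h_i\}_{i\geq1}\subset\langle\mathscr{F}\rangle^+$ such that $B\subset\bigcup_{i=1}^\infty h_i(B)$ and $\lim_{n\to\infty}\mathrm{diam}(h_{i_1}\circ\dots\circ h_{i_n}(B))=0$ for every sequence $(i_n)_{n\geq1}$ of positive integers with $h_{i_1}\circ\dots\circ h_{i_n}(B)\cap B\neq\emptyset$ for all $n$. Then $\mathscr{F}$ is minimal.
   Context: $\mathrm{IFS}_k(X)$ is the set of families of $k$ locally Lipschitz homeomorphisms of $X$ (up to reordering). $\langle\mathscr{F}\rangle^+$ is the semigroup of finite compositions of elements of $\mathscr{F}$. $\mathcal{O}^+_{\mathscr{F}}(A)=\{h(x):h\in\langle\mathscr{F}\rangle^+,x\in A\}$, $\mathcal{O}^-_{\mathscr{F}}(A)=\{h^{-1}(x):h\in\langle\mathscr{F}\rangle^+,x\in A\}$. $\mathscr{F}$ is minimal if $\mathcal{O}^+_{\mathscr{F}}(\{x\})$ is dense for every $x\in X$. *)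

theory Defs
  imports "HOL-Analysis.Analysis"
begin

text \<open>The metric space X is the whole carrier of a type of class metric_space.\<close>

definition loc_lipschitz :: "('a::metric_space \<Rightarrow> 'b::metric_space) \<Rightarrow> bool" where
  "loc_lipschitz f \<longleftrightarrow> (\<forall>x. \<exists>e>0. \<exists>L. L-lipschitz_on (ball x e) f)"

definition loc_lip_homeo :: "('a::metric_space \<Rightarrow> 'a) \<Rightarrow> bool" where
  "loc_lip_homeo f \<longleftrightarrow> (\<exists>g. homeomorphism UNIV UNIV f g) \<and> loc_lipschitz f"

text \<open>IFS_k(X): families of k locally Lipschitz homeomorphisms, given as a list
  (the order is irrelevant for everything below).\<close>
definition IFS :: "nat \<Rightarrow> ('a::metric_space \<Rightarrow> 'a) list set" where
  "IFS k = {fs. length fs = k \<and> (\<forall>f\<in>set fs. loc_lip_homeo f)}"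

inductive_set semigrp :: "('a \<Rightarrow> 'a) list \<Rightarrow> ('a \<Rightarrow> 'a) set" for fs where
  gen: "f \<in> set fs \<Longrightarrow> f \<in> semigrp fs"
| comp: "f \<in> set fs \<Longrightarrow> h \<in> semigrp fs \<Longrightarrow> f \<circ> h \<in> semigrp fs"

definition orbit_plus :: "('a \<Rightarrow> 'a) list \<Rightarrow> 'a set \<Rightarrow> 'a set" where
  "orbit_plus fs A = {h x | h x. h \<in> semigrp fs \<and> x \<in> A}"

definition orbit_minus :: "('a \<Rightarrow> 'a) list \<Rightarrow> 'a set \<Rightarrow> 'a set" where
  "orbit_minus fs A = {inv h x | h x. h \<in> semigrp fs \<and> x \<in> A}"

definition minimal_IFS :: "('a::topological_space \<Rightarrow> 'a) list \<Rightarrow> bool" where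
  "minimal_IFS fs \<longleftrightarrow> (\<forall>x. closure (orbit_plus fs {x}) = UNIV)"

text \<open>compseq hs s n = hs (s 0) \<circ> hs (s 1) \<circ> ... \<circ> hs (s (n-1)).\<close>
primrec compseq :: "(nat \<Rightarrow> 'a \<Rightarrow> 'a) \<Rightarrow> (nat \<Rightarrow> nat) \<Rightarrow> nat \<Rightarrow> 'a \<Rightarrow> 'a" where
  "compseq hs s 0 = id"
| "compseq hs s (Suc n) = compseq hs s n \<circ> hs (s n)"

end

theory Submission
  imports Defs
begin

text \<open>Every point x has some point b = h x of B in its forward orbit. A point z of B lies in
  the image h_{i_1} \<circ> \<dots> \<circ> h_{i_n} (B) for a suitable itinerary (i_n), obtained by pulling z
  back through B step by step; these images shrink, so their points h_{i_1} \<circ> \<dots> \<circ> h_{i_n} (b),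
  which lie in the forward orbit of x, converge to z. Hence B lies in the orbit closure of x,
  and this closure is forward invariant, so it contains the closure of the orbit of B,
  which is X.\<close>

lemma semigrp_comp:
  assumes "g \<in> semigrp fs" "h \<in> semigrp fs"
  shows "g \<circ> h \<in> semigrp fs"
  using assms(1)
proof induction
  case (gen f)
  then show ?case using assms(2) by (rule semigrp.comp)
next
  case (comp f g)
  then show ?case by (metis comp_assoc semigrp.comp)
qed

lemma semigrp_induct_comp:
  assumes "h \<in> semigrp fs" "\<And>f. f \<in> set fs \<Longrightarrow> P f"
    and "\<And>f g. P f \<Longrightarrow> P g \<Longrightarrow> P (f \<circ> g)"
  shows "P h"
  using assms(1) by induction (metis assms(2,3))+

lemma semigrp_continuous:
  assumes "\<forall>f\<in>set fs. continuous_on UNIV f" "h \<in> semigrp fs"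
  shows "continuous_on UNIV h"
  using assms(2) by (rule semigrp_induct_comp)
    (use assms(1) in \<open>auto intro: continuous_on_compose2\<close>)

lemma semigrp_surj:
  assumes "\<forall>f\<in>set fs. surj f" "h \<in> semigrp fs"
  shows "surj h"
  using assms(2) by (rule semigrp_induct_comp) (use assms(1) comp_surj in blast)+

lemma IFS_continuous_surj:
  assumes "fs \<in> IFS k" "f \<in> set fs"
  shows "continuous_on UNIV f" "surj f"
  using assms unfolding IFS_def loc_lip_homeo_def homeomorphism_def by auto

lemma compseq_in_semigrp:
  assumes "\<forall>i. hs i \<in> semigrp fs" "n \<ge> 1"
  shows "compseq hs s n \<in> semigrp fs"
  using assms(2)
proof (induction n rule: dec_induct)
  case base
  then show ?case using assms(1) by simp
next
  case (step n)
  then show ?case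
    unfolding compseq.simps using assms(1) by (blast intro: semigrp_comp)
qed

lemma semigrp_image_orbit_plus:
  assumes "g \<in> semigrp fs"
  shows "g ` orbit_plus fs A \<subseteq> orbit_plus fs A"
proof (rule image_subsetI)
  fix y assume "y \<in> orbit_plus fs A"
  then obtain h a where "h \<in> semigrp fs" "a \<in> A" "y = h a"
    unfolding orbit_plus_def by blast
  then show "g y \<in> orbit_plus fs A"
    unfolding orbit_plus_def using semigrp_comp[OF assms]
    by (intro CollectI exI[of _ "g \<circ> h"] exI[of _ a]) simp
qed

lemma semigrp_image_closure_orbit_plus:
  assumes "\<forall>f\<in>set fs. continuous_on UNIV f" "g \<in> semigrp fs"
  shows "g ` closure (orbit_plus fs A) \<subseteq> closure (orbit_plus fs A)"
  using semigrp_continuous[OF assms] semigrp_image_orbit_plus[OF assms(2)]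
  by (intro image_closure_subset) (auto intro: continuous_on_subset closure_subset[THEN subsetD])

lemma closure_orbit_plus_UNIV:
  assumes "\<forall>f\<in>set fs. continuous_on UNIV f" "closure (orbit_plus fs B) = UNIV"
    and "B \<subseteq> closure (orbit_plus fs A)"
  shows "closure (orbit_plus fs A) = UNIV"
proof -
  have "orbit_plus fs B \<subseteq> closure (orbit_plus fs A)"
    using assms(3) semigrp_image_closure_orbit_plus[OF assms(1)]
    unfolding orbit_plus_def by blast
  then show ?thesis using assms(2) closure_minimal by blast
qed

lemma backward_itinerary:
  assumes "B \<subseteq> (\<Union>i. hs i ` B)" "z \<in> B"
  obtains s where "\<forall>n. z \<in> compseq hs s n ` B"
proof -
  have "\<forall>w\<in>B. \<exists>iv. snd iv \<in> B \<and> hs (fst iv) (snd iv) = w"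
    using assms(1) by fastforce
  then obtain G where G: "\<forall>w\<in>B. snd (G w) \<in> B \<and> hs (fst (G w)) (snd (G w)) = w"
    by (rule bchoice[elim_format]) blast
  define p where "p = rec_nat z (\<lambda>_ w. snd (G w))"
  define s where "s = (\<lambda>n. fst (G (p n)))"
  have p0: "p 0 = z" and pS: "\<And>n. p (Suc n) = snd (G (p n))"
    unfolding p_def by auto
  have pB: "p n \<in> B" for n
    by (induction n) (use assms(2) p0 pS G in auto)
  have "compseq hs s n (p n) = z" for n
    by (induction n) (use p0 pS G pB in \<open>auto simp: s_def\<close>)
  then have "\<forall>n. z \<in> compseq hs s n ` B"
    using pB by (metis image_eqI)
  then show thesis by (rule that)
qed

lemma tendsto_of_diameter_image:
  fixes f :: "nat \<Rightarrow> 'a \<Rightarrow> 'b::metric_space"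
  assumes "\<forall>n. z \<in> f n ` B" "b \<in> B"
    and "\<forall>\<^sub>F n in sequentially. bounded (f n ` B)"
    and "(\<lambda>n. diameter (f n ` B)) \<longlonglongrightarrow> 0"
  shows "(\<lambda>n. f n b) \<longlonglongrightarrow> z"
proof -
  have "norm (dist (f n b) z) \<le> diameter (f n ` B)" if "bounded (f n ` B)" for n
    using diameter_bounded_bound[OF that imageI[OF assms(2)] assms(1)[rule_format]] by simp
  with assms(3) have "\<forall>\<^sub>F n in sequentially. norm (dist (f n b) z) \<le> diameter (f n ` B)"
    by (rule eventually_mono)
  then have "(\<lambda>n. dist (f n b) z) \<longlonglongrightarrow> 0"
    using assms(4) by (rule Lim_null_comparison)
  then show ?thesis
    by (rule tendsto_dist_iff[THEN iffD2])
qed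

lemma shrinking_cover_subset_closure_orbit_plus:
  assumes "\<forall>i. hs i \<in> semigrp fs" "B \<subseteq> (\<Union>i. hs i ` B)"
    and "\<forall>s. (\<forall>n\<ge>1. compseq hs s n ` B \<inter> B \<noteq> {}) \<longrightarrow>
            ((\<forall>\<^sub>F n in sequentially. bounded (compseq hs s n ` B)) \<and>
             (\<lambda>n. diameter (compseq hs s n ` B)) \<longlonglongrightarrow> 0)"
    and "h \<in> semigrp fs" "h x \<in> B"
  shows "B \<subseteq> closure (orbit_plus fs {x})"
proof
  fix z assume "z \<in> B"
  then obtain s where s: "\<forall>n. z \<in> compseq hs s n ` B"
    using backward_itinerary[OF assms(2)] by blast
  then have "\<forall>n\<ge>1. compseq hs s n ` B \<inter> B \<noteq> {}"
    using \<open>z \<in> B\<close> by blast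
  with assms(3) obtain bdd: "\<forall>\<^sub>F n in sequentially. bounded (compseq hs s n ` B)"
    and shrink: "(\<lambda>n. diameter (compseq hs s n ` B)) \<longlonglongrightarrow> 0"
    by blast
  have lim: "(\<lambda>n. compseq hs s n (h x)) \<longlonglongrightarrow> z"
    using s assms(5) bdd shrink by (rule tendsto_of_diameter_image)
  have "\<forall>\<^sub>F n in sequentially. compseq hs s n (h x) \<in> closure (orbit_plus fs {x})"
    using eventually_ge_at_top[of 1]
  proof eventually_elim
    case (elim n)
    have "compseq hs s n \<circ> h \<in> semigrp fs"
      using semigrp_comp[OF compseq_in_semigrp[OF assms(1) elim] assms(4)] .
    then have "compseq hs s n (h x) \<in> orbit_plus fs {x}"
      unfolding orbit_plus_def by (intro CollectI exI[of _ "compseq hs s n \<circ> h"] exI[of _ x]) simp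
    then show ?case using closure_subset by blast
  qed
  from Lim_in_closed_set[OF closed_closure this trivial_limit_sequentially lim]
  show "z \<in> closure (orbit_plus fs {x})" .
qed

theorem mainTheorem13:
  fixes fs :: "('a::metric_space \<Rightarrow> 'a) list" and k :: nat
    and B :: "'a set" and hs :: "nat \<Rightarrow> 'a \<Rightarrow> 'a"
  assumes "fs \<in> IFS k"
    and "open B"
    and "closure (orbit_plus fs B) = UNIV"
    and "orbit_minus fs B = UNIV"
    and "\<forall>i. hs i \<in> semigrp fs"
    and "B \<subseteq> (\<Union>i. hs i ` B)"
    and "\<forall>s. (\<forall>n\<ge>1. compseq hs s n ` B \<inter> B \<noteq> {}) \<longrightarrow>
            ((\<forall>\<^sub>F n in sequentially. bounded (compseq hs s n ` B)) \<and>
             (\<lambda>n. diameter (compseq hs s n ` B)) \<longlonglongrightarrow> 0)"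
  shows "minimal_IFS fs"
  unfolding minimal_IFS_def
proof
  fix x :: 'a
  have cont: "\<forall>f\<in>set fs. continuous_on UNIV f" and onto: "\<forall>f\<in>set fs. surj f"
    using IFS_continuous_surj[OF assms(1)] by auto
  obtain h b where h: "h \<in> semigrp fs" and "b \<in> B" and "x = inv h b"
    using assms(4) unfolding orbit_minus_def by blast
  then have "h x \<in> B" using semigrp_surj[OF onto h] by (simp add: surj_f_inv_f)
  with assms(5-7) h have "B \<subseteq> closure (orbit_plus fs {x})"
    by (rule shrinking_cover_subset_closure_orbit_plus)
  then show "closure (orbit_plus fs {x}) = UNIV"
    by (rule closure_orbit_plus_UNIV[OF cont assms(3)])
qed

end
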